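(* Let $\eta>0$, $n\ge1$, $b\in\{1,\dots,n\}$. Let $X_n=(x_1,\dots,x_n)$ and $\hat X_n=(\hat x_1,\dots,\hat x_n)$ with $x_i=(a_i,y_i)$, $\hat x_i=(\hat a_i,\hat y_i)\in\mathcal{X}\subseteq\mathbb{R}^d\times\mathbb{R}$, differing in at most one index, and assume $\sup_{x\in\mathcal{X}}\Vert x\Vert\le D<\infty$. Let $(\Omega_k)_{k\ge1}$ be i.i.d. uniformly random subsets of $\{1,\dots,n\}$ of cardinality $b$, $H_k=\sum_{i\in\Omega_k}a_ia_i^\top$, $q_k=\sum_{i\in\Omega_k}a_iy_i$, $\hat H_k=\sum_{i\in\Omega_k}\hat a_i\hat a_i^\top$, $\hat q_k=\sum_{i\in\Omega_k}\hat a_i\hat y_i$, and consider $$\theta_k=\left(I-\tfrac{\eta}{b}H_k\right)\theta_{k-1}+\tfrac{\eta}{b}q_k,\qquad\hat\theta_k=\left(I-\tfrac{\eta}{b}\hat H_k\right)\hat\theta_{k-1}+\tfrac{\eta}{b}\hat q_k,$$ with $\theta_0=\hat\theta_0=\theta\in\mathbb{R}^d$. Assume $\rho:=\mathbb{E}\Vert I-\frac{\eta}{b}H_1\Vert<1$ and $\hat\rho:=\mathbb{E}\Vert I-\frac{\eta}{b}\hat H_1\Vert<1$. Let $\nu_k,\hat\nu_k$ be the laws of $\theta_k,\hat\theta_k$. Then for every $k$, $$\mathcal{W}_1(\nu_k,\hat\nu_k)\le\frac{1-\rho^k}{1-\rho}\cdot\frac{2\eta D^2}{n}\max\left\{1+\Vert\theta\Vert,\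 \frac{1-\hat\rho+\frac{\eta}{b}\mathbb{E}\Vert\hat q_1\Vert}{1-\hat\rho}\right\}.$$
   Context: This is minibatch SGD for the quadratic loss $f(\theta,(a,y))=(a^\top\theta-y)^2/2$ on two datasets differing in at most one point. Matrix norms are operator norms; $\mathcal{W}_1$ is the 1-Wasserstein distance. *)

theory Defs
  imports "HOL-Analysis.Analysis" "HOL-Probability.Probability"
begin

text \<open>Minibatches: subsets of the index set {0..<n} of cardinality b
  (indices are 0-based here).\<close>
definition batches :: "nat \<Rightarrow> nat \<Rightarrow> nat set set" where
  "batches n b = {S. S \<subseteq> {..<n} \<and> card S = b}"

definition outer :: "real^'d \<Rightarrow> real^'d^'d" where
  "outer a = (\<chi> i j. a $ i * a $ j)"

definition Hmat :: "(nat \<Rightarrow> (real^'d) \<times> real) \<Rightarrow> nat set \<Rightarrow> real^'d^'d" where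
  "Hmat X S = (\<Sum>i\<in>S. outer (fst (X i)))"

definition qvec :: "(nat \<Rightarrow> (real^'d) \<times> real) \<Rightarrow> nat set \<Rightarrow> real^'d" where
  "qvec X S = (\<Sum>i\<in>S. snd (X i) *\<^sub>R fst (X i))"

definition sgd_step :: "real \<Rightarrow> nat \<Rightarrow> (nat \<Rightarrow> (real^'d) \<times> real) \<Rightarrow> nat set \<Rightarrow> real^'d \<Rightarrow> real^'d" where
  "sgd_step \<eta> b X S t =
     (mat 1 - (\<eta> / real b) *\<^sub>R Hmat X S) *v t + (\<eta> / real b) *\<^sub>R qvec X S"

text \<open>Law of theta_k: batches are i.i.d. uniform over b-subsets and independent
  of the past, so the law evolves as a Markov chain.\<close>
fun sgd_law :: "real \<Rightarrow> nat \<Rightarrow> nat \<Rightarrow> (nat \<Rightarrow> (real^'d) \<times> real) \<Rightarrow> real^'d \<Rightarrow> nat \<Rightarrow> (real^'d) pmf" where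
  "sgd_law \<eta> n b X \<theta> 0 = return_pmf \<theta>"
| "sgd_law \<eta> n b X \<theta> (Suc k) =
     bind_pmf (sgd_law \<eta> n b X \<theta> k)
       (\<lambda>t. map_pmf (\<lambda>S. sgd_step \<eta> b X S t) (pmf_of_set (batches n b)))"

definition wasserstein1 :: "'a::metric_space pmf \<Rightarrow> 'a pmf \<Rightarrow> real" where
  "wasserstein1 p q = Inf {measure_pmf.expectation c (\<lambda>(x, y). dist x y) | c.
      map_pmf fst c = p \<and> map_pmf snd c = q}"

end

theory Submission
  imports Defs
begin

(* Couple the two chains synchronously, feeding both the same minibatch S at every step.
   From a pair (t, s) one step moves to distance at most ||I - (\<eta>/b) H_S|| |t - s| plus a
   perturbation that vanishes unless S contains the index where the datasets differ, which
   happens with probability b/n; it is then at most (\<eta>/b) 2 D\<^sup>2 (1 + |s|), as each per-sample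
   gradient at s is bounded by D\<^sup>2 (1 + |s|).  Hence the coupling's expected distance e_k satisfies
   e_(k+1) \<le> \<rho> e_k + (2 \<eta> D\<^sup>2 / n) (1 + E|\<theta>h_k|).  The moment E|\<theta>h_k| obeys an affine
   recursion with factor \<rho>h, so 1 + E|\<theta>h_k| never exceeds the maximum in the bound; unrolling
   the recursion for e_k from e_0 = 0 gives the factor (1 - \<rho>^k) / (1 - \<rho>), and e_k bounds W_1. *)

abbreviation batch_pmf :: "nat \<Rightarrow> nat \<Rightarrow> nat set pmf" where
  "batch_pmf n b \<equiv> pmf_of_set (batches n b)"

lemma expectation_bind_pmf_le:
  fixes h :: "'b \<Rightarrow> real" and u :: "'a \<Rightarrow> real"
  assumes fin: "finite (set_pmf p)"
    and fin_K: "\<And>x. x \<in> set_pmf p \<Longrightarrow> finite (set_pmf (K x))"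
    and step: "\<And>x. x \<in> set_pmf p \<Longrightarrow> measure_pmf.expectation (K x) h \<le> u x"
  shows "measure_pmf.expectation (bind_pmf p K) h \<le> measure_pmf.expectation p u"
proof -
  have "measure_pmf.expectation (bind_pmf p K) h
      = measure_pmf.expectation p (\<lambda>x. measure_pmf.expectation (K x) h)"
    using fin fin_K
    by (simp add: pmf_expectation_bind[of "set_pmf p"] integral_measure_pmf[of "set_pmf p"])
  also have "\<dots> \<le> measure_pmf.expectation p u"
    using fin step
    by (intro integral_mono_AE integrable_measure_pmf_finite) (simp_all add: AE_measure_pmf_iff)
  finally show ?thesis .
qed

lemma wasserstein1_le_coupling:
  assumes "map_pmf fst c = p" and "map_pmf snd c = q"
  shows "wasserstein1 p q \<le> measure_pmf.expectation c (\<lambda>(x, y). dist x y)"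
  unfolding wasserstein1_def
proof (rule cInf_lower)
  show "bdd_below {measure_pmf.expectation c (\<lambda>(x, y). dist x y) | c.
      map_pmf fst c = p \<and> map_pmf snd c = q}"
    by (rule bdd_belowI[of _ 0]) (auto intro!: integral_nonneg simp: case_prod_beta)
qed (use assms in blast)

lemma finite_batches: "finite (batches n b)"
  unfolding batches_def by (rule finite_subset[of _ "Pow {..<n}"]) auto

lemma batches_nonempty: "b \<le> n \<Longrightarrow> batches n b \<noteq> {}"
  unfolding batches_def by (auto intro!: exI[of _ "{..<b}"])

lemma set_batch_pmf [simp]: "b \<le> n \<Longrightarrow> set_pmf (batch_pmf n b) = batches n b"
  by (simp add: finite_batches batches_nonempty)

lemma integrable_batch_pmf: "b \<le> n \<Longrightarrow> integrable (batch_pmf n b) (f :: nat set \<Rightarrow> real)"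
  by (simp add: integrable_measure_pmf_finite finite_batches)

lemma card_batches: "card (batches n b) = n choose b"
  unfolding batches_def using n_subsets[of "{..<n}" b] by simp

lemma card_batches_containing:
  assumes "j < n" and "b \<le> n"
  shows "n * card {S \<in> batches n b. j \<in> S} = b * card (batches n b)"
proof -
  have "{S \<in> batches n b. j \<notin> S} = {S. S \<subseteq> {..<n} - {j} \<and> card S = b}"
    unfolding batches_def by auto
  then have without: "card {S \<in> batches n b. j \<notin> S} = (n - 1) choose b"
    using assms(1) n_subsets[of "{..<n} - {j}" b] by simp
  have "card {S \<in> batches n b. j \<in> S} + card {S \<in> batches n b. j \<notin> S} = card (batches n b)"
    using finite_batches by (subst card_Un_disjoint[symmetric]) (auto intro: arg_cong[where f = card])
  then have "n * card {S \<in> batches n b. j \<in> S} + (n - b) * (n choose b) = n * (n choose b)"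
    by (simp add: without card_batches binomial_absorb_comp add_mult_distrib2[symmetric])
  moreover have "(n - b) * (n choose b) + b * (n choose b) = n * (n choose b)"
    using assms(2) by (simp add: add_mult_distrib[symmetric])
  ultimately show ?thesis
    by (simp add: card_batches)
qed

lemma prob_batch_contains:
  assumes "j < n" and "b \<le> n"
  shows "measure_pmf.prob (batch_pmf n b) {S. j \<in> S} = real b / real n"
proof -
  have "real n * real (card {S \<in> batches n b. j \<in> S}) = real b * real (card (batches n b))"
    using card_batches_containing[OF assms] by (metis of_nat_mult)
  moreover have "card (batches n b) > 0"
    using finite_batches batches_nonempty[OF assms(2)] by (simp add: card_gt_0_iff)
  ultimately show ?thesis
    using assms finite_batches batches_nonempty[OF assms(2)]
    by (simp add: measure_pmf_of_set Int_def field_simps)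
qed

lemma expectation_batch_sum:
  fixes g :: "nat \<Rightarrow> real"
  assumes "b \<le> n"
  shows "measure_pmf.expectation (batch_pmf n b) (\<lambda>S. \<Sum>i\<in>S. g i) = real b / real n * (\<Sum>i<n. g i)"
proof -
  have "S \<subseteq> {..<n}" if "S \<in> set_pmf (batch_pmf n b)" for S
    using that assms by simp (simp add: batches_def)
  then have "measure_pmf.expectation (batch_pmf n b) (\<lambda>S. \<Sum>i\<in>S. g i)
      = measure_pmf.expectation (batch_pmf n b) (\<lambda>S. \<Sum>i<n. g i * indicator {S. i \<in> S} S)"
    by (intro integral_cong_AE) (auto simp: AE_measure_pmf_iff sum.If_cases indicator_def Int_absorb1)
  also have "\<dots> = (\<Sum>i<n. g i * measure_pmf.prob (batch_pmf n b) {S. i \<in> S})"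
    using assms by (subst Bochner_Integration.integral_sum) (simp_all add: integrable_batch_pmf)
  also have "\<dots> = (\<Sum>i<n. g i * (real b / real n))"
    using assms by (simp add: prob_batch_contains)
  finally show ?thesis
    by (simp add: sum_distrib_left sum_divide_distrib mult.commute)
qed

type_synonym 'd dataset = "nat \<Rightarrow> (real^'d) \<times> real"

abbreviation step_matrix :: "real \<Rightarrow> nat \<Rightarrow> ('d::finite) dataset \<Rightarrow> nat set \<Rightarrow> real^'d^'d" where
  "step_matrix \<eta> b X S \<equiv> mat 1 - (\<eta> / real b) *\<^sub>R Hmat X S"

abbreviation mean_contraction :: "real \<Rightarrow> nat \<Rightarrow> nat \<Rightarrow> ('d::finite) dataset \<Rightarrow> real" where
  "mean_contraction \<eta> n b X \<equiv>
     measure_pmf.expectation (batch_pmf n b) (\<lambda>S. onorm (\<lambda>v. step_matrix \<eta> b X S *v v))"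

(* the gradient in \<theta> of the loss (a \<bullet> \<theta> - y)\<^sup>2 / 2 at the sample x = (a, y) *)
definition loss_grad :: "(real^'d) \<times> real \<Rightarrow> real^'d \<Rightarrow> real^'d" where
  "loss_grad x \<theta> = (fst x \<bullet> \<theta> - snd x) *\<^sub>R fst x"

lemma outer_mult_vec: "outer a *v v = (a \<bullet> v) *\<^sub>R a"
  by (simp add: vec_eq_iff outer_def matrix_vector_mult_def inner_vec_def sum_distrib_left mult_ac)

lemma sum_matrix_vector_mult: "(\<Sum>i\<in>S. M i) *v v = (\<Sum>i\<in>S. M i *v v)"
  by (induction S rule: infinite_finite_induct) (simp_all add: matrix_vector_mult_add_rdistrib)

lemma Hmat_qvec_loss_grad: "Hmat X S *v \<theta> - qvec X S = (\<Sum>i\<in>S. loss_grad (X i) \<theta>)"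
  by (simp add: Hmat_def qvec_def loss_grad_def sum_matrix_vector_mult outer_mult_vec
      sum_subtractf[symmetric] scaleR_left_diff_distrib)

lemma sgd_step_diff:
  "sgd_step \<eta> b X S t - sgd_step \<eta> b Xh S s =
     step_matrix \<eta> b X S *v (t - s)
       - (\<eta> / real b) *\<^sub>R (\<Sum>i\<in>S. loss_grad (X i) s - loss_grad (Xh i) s)"
proof -
  have "(\<Sum>i\<in>S. loss_grad (X i) s - loss_grad (Xh i) s)
      = (Hmat X S *v s - qvec X S) - (Hmat Xh S *v s - qvec Xh S)"
    by (simp add: Hmat_qvec_loss_grad sum_subtractf)
  then show ?thesis
    unfolding sgd_step_def
    by (simp only:) (simp add: matrix_vector_mult_diff_rdistrib matrix_vector_mult_diff_distrib
        scaleR_matrix_vector_assoc[symmetric] algebra_simps)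
qed

lemma norm_loss_grad_le:
  assumes "norm x \<le> D"
  shows "norm (loss_grad x \<theta>) \<le> D\<^sup>2 * (1 + norm \<theta>)"
proof -
  obtain a y where x: "x = (a, y)" by fastforce
  have a: "norm a \<le> D" and y: "\<bar>y\<bar> \<le> D"
    using assms norm_fst_le[of a y] norm_snd_le[of y a] by (simp_all add: x del: norm_Pair)
  have "norm (loss_grad x \<theta>) = \<bar>a \<bullet> \<theta> - y\<bar> * norm a"
    by (simp add: loss_grad_def x)
  also have "\<dots> \<le> (norm a * norm \<theta> + \<bar>y\<bar>) * norm a"
    using Cauchy_Schwarz_ineq2[of a \<theta>] by (intro mult_right_mono) auto
  also have "\<dots> \<le> (D * norm \<theta> + D) * D"
    using a y by (intro mult_mono add_mono) auto
  finally show ?thesis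
    by (simp add: power2_eq_square algebra_simps)
qed

lemma sum_norm_loss_grad_diff_le:
  fixes X Xh :: "('d::finite) dataset"
  assumes "card {i \<in> {..<n}. X i \<noteq> Xh i} \<le> 1"
    and "\<forall>i<n. norm (X i) \<le> D \<and> norm (Xh i) \<le> D"
  shows "(\<Sum>i<n. norm (loss_grad (X i) s - loss_grad (Xh i) s)) \<le> 2 * D\<^sup>2 * (1 + norm s)"
proof -
  let ?J = "{i \<in> {..<n}. X i \<noteq> Xh i}"
  have "(\<Sum>i<n. norm (loss_grad (X i) s - loss_grad (Xh i) s))
      = (\<Sum>i\<in>?J. norm (loss_grad (X i) s - loss_grad (Xh i) s))"
    by (rule sum.mono_neutral_right) auto
  also have "\<dots> \<le> (\<Sum>i\<in>?J. 2 * D\<^sup>2 * (1 + norm s))"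
  proof (rule sum_mono)
    fix i assume "i \<in> ?J"
    then have "norm (loss_grad (X i) s) \<le> D\<^sup>2 * (1 + norm s)"
      and "norm (loss_grad (Xh i) s) \<le> D\<^sup>2 * (1 + norm s)"
      using assms(2) by (simp_all add: norm_loss_grad_le)
    then show "norm (loss_grad (X i) s - loss_grad (Xh i) s) \<le> 2 * D\<^sup>2 * (1 + norm s)"
      using norm_triangle_ineq4[of "loss_grad (X i) s" "loss_grad (Xh i) s"] by linarith
  qed
  also have "\<dots> = real (card ?J) * (2 * D\<^sup>2 * (1 + norm s))"
    by simp
  also have "\<dots> \<le> 2 * D\<^sup>2 * (1 + norm s)"
    using assms(1) by (intro mult_left_le_one_le) auto
  finally show ?thesis .
qed

lemma mean_contraction_nonneg: "0 \<le> mean_contraction \<eta> n b X"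
  by (intro Bochner_Integration.integral_nonneg) (simp add: onorm_pos_le)

lemma dist_sgd_step_le:
  assumes "0 \<le> \<eta>"
  shows "dist (sgd_step \<eta> b X S t) (sgd_step \<eta> b Xh S s)
    \<le> onorm (\<lambda>v. step_matrix \<eta> b X S *v v) * dist t s
      + \<eta> / real b * (\<Sum>i\<in>S. norm (loss_grad (X i) s - loss_grad (Xh i) s))"
proof -
  have "norm (step_matrix \<eta> b X S *v (t - s)) \<le> onorm (\<lambda>v. step_matrix \<eta> b X S *v v) * norm (t - s)"
    using onorm[OF matrix_vector_mul_bounded_linear] by blast
  moreover have "norm ((\<eta> / real b) *\<^sub>R (\<Sum>i\<in>S. loss_grad (X i) s - loss_grad (Xh i) s))
      \<le> \<eta> / real b * (\<Sum>i\<in>S. norm (loss_grad (X i) s - loss_grad (Xh i) s))"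
    using assms by simp (intro divide_right_mono mult_left_mono norm_sum; simp)
  ultimately show ?thesis
    unfolding dist_norm sgd_step_diff
    using norm_triangle_ineq4[of "step_matrix \<eta> b X S *v (t - s)"
        "(\<eta> / real b) *\<^sub>R (\<Sum>i\<in>S. loss_grad (X i) s - loss_grad (Xh i) s)"]
    by linarith
qed

lemma expectation_dist_sgd_step_le:
  fixes X Xh :: "('d::finite) dataset"
  assumes "0 \<le> \<eta>" and "0 < b" and "b \<le> n"
    and "card {i \<in> {..<n}. X i \<noteq> Xh i} \<le> 1"
    and "\<forall>i<n. norm (X i) \<le> D \<and> norm (Xh i) \<le> D"
  shows "measure_pmf.expectation (batch_pmf n b) (\<lambda>S. dist (sgd_step \<eta> b X S t) (sgd_step \<eta> b Xh S s))
    \<le> mean_contraction \<eta> n b X * dist t s + 2 * \<eta> * D\<^sup>2 / real n * (1 + norm s)"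
proof -
  let ?g = "\<lambda>i. norm (loss_grad (X i) s - loss_grad (Xh i) s)"
  have "measure_pmf.expectation (batch_pmf n b) (\<lambda>S. dist (sgd_step \<eta> b X S t) (sgd_step \<eta> b Xh S s))
      \<le> measure_pmf.expectation (batch_pmf n b)
          (\<lambda>S. onorm (\<lambda>v. step_matrix \<eta> b X S *v v) * dist t s + \<eta> / real b * (\<Sum>i\<in>S. ?g i))"
    using assms(1,3) by (intro integral_mono integrable_batch_pmf dist_sgd_step_le)
  also have "\<dots> = mean_contraction \<eta> n b X * dist t s + \<eta> / real n * (\<Sum>i<n. ?g i)"
    using assms(2,3) by (simp add: integrable_batch_pmf expectation_batch_sum)
  also have "\<dots> \<le> mean_contraction \<eta> n b X * dist t s + \<eta> / real n * (2 * D\<^sup>2 * (1 + norm s))"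
    using assms(1,4,5) by (intro add_left_mono mult_left_mono sum_norm_loss_grad_diff_le) auto
  finally show ?thesis
    by (simp add: ac_simps)
qed

lemma expectation_norm_sgd_step_le:
  assumes "0 \<le> \<eta>" and "b \<le> n"
  shows "measure_pmf.expectation (batch_pmf n b) (\<lambda>S. norm (sgd_step \<eta> b X S s))
    \<le> mean_contraction \<eta> n b X * norm s
      + \<eta> / real b * measure_pmf.expectation (batch_pmf n b) (\<lambda>S. norm (qvec X S))"
proof -
  have "norm (sgd_step \<eta> b X S s)
      \<le> onorm (\<lambda>v. step_matrix \<eta> b X S *v v) * norm s + \<eta> / real b * norm (qvec X S)" for S
    using onorm[OF matrix_vector_mul_bounded_linear, of "step_matrix \<eta> b X S" s]
      norm_triangle_ineq[of "step_matrix \<eta> b X S *v s" "(\<eta> / real b) *\<^sub>R qvec X S"] assms(1)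
    by (simp add: sgd_step_def)
  then have "measure_pmf.expectation (batch_pmf n b) (\<lambda>S. norm (sgd_step \<eta> b X S s))
      \<le> measure_pmf.expectation (batch_pmf n b)
          (\<lambda>S. onorm (\<lambda>v. step_matrix \<eta> b X S *v v) * norm s + \<eta> / real b * norm (qvec X S))"
    using assms(2) by (intro integral_mono integrable_batch_pmf)
  then show ?thesis
    using assms(2) by (simp add: integrable_batch_pmf)
qed

fun sgd_coupling ::
    "real \<Rightarrow> nat \<Rightarrow> nat \<Rightarrow> ('d::finite) dataset \<Rightarrow> 'd dataset \<Rightarrow> real^'d \<Rightarrow> nat
      \<Rightarrow> ((real^'d) \<times> (real^'d)) pmf"
  where
  "sgd_coupling \<eta> n b X Xh \<theta> 0 = return_pmf (\<theta>, \<theta>)"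
| "sgd_coupling \<eta> n b X Xh \<theta> (Suc k) =
     bind_pmf (sgd_coupling \<eta> n b X Xh \<theta> k)
       (\<lambda>(t, s). map_pmf (\<lambda>S. (sgd_step \<eta> b X S t, sgd_step \<eta> b Xh S s)) (batch_pmf n b))"

lemma map_fst_sgd_coupling: "map_pmf fst (sgd_coupling \<eta> n b X Xh \<theta> k) = sgd_law \<eta> n b X \<theta> k"
proof (induction k)
  case (Suc k)
  show ?case
    by (simp add: map_bind_pmf bind_map_pmf pmf.map_comp o_def case_prod_beta flip: Suc.IH)
qed simp

lemma map_snd_sgd_coupling: "map_pmf snd (sgd_coupling \<eta> n b X Xh \<theta> k) = sgd_law \<eta> n b Xh \<theta> k"
proof (induction k)
  case (Suc k)
  show ?case
    by (simp add: map_bind_pmf bind_map_pmf pmf.map_comp o_def case_prod_beta flip: Suc.IH)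
qed simp

lemma finite_set_pmf_sgd_coupling: "b \<le> n \<Longrightarrow> finite (set_pmf (sgd_coupling \<eta> n b X Xh \<theta> k))"
  by (induction k) (auto simp: finite_batches)

lemma finite_set_pmf_sgd_law: "b \<le> n \<Longrightarrow> finite (set_pmf (sgd_law \<eta> n b X \<theta> k))"
  by (induction k) (auto simp: finite_batches)

lemma affine_recursion_le_bound:
  fixes u :: "nat \<Rightarrow> real"
  assumes "0 \<le> r" and "\<And>j. u (Suc j) \<le> r * u j + c" and "u 0 \<le> M" and "c \<le> (1 - r) * M"
  shows "u k \<le> M"
proof (induction k)
  case (Suc k)
  have "u (Suc k) \<le> r * M + (1 - r) * M"
    using assms(2)[of k] mult_left_mono[OF Suc assms(1)] assms(4) by linarith
  then show ?case
    by (simp add: algebra_simps)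
qed (use assms(3) in simp)

lemma affine_recursion_le_geometric:
  fixes u :: "nat \<Rightarrow> real"
  assumes "0 \<le> r" and "r \<noteq> 1" and "\<And>j. u (Suc j) \<le> r * u j + c" and "u 0 \<le> 0"
  shows "u k \<le> (1 - r ^ k) / (1 - r) * c"
proof (induction k)
  case (Suc k)
  have "u (Suc k) \<le> r * ((1 - r ^ k) / (1 - r) * c) + c"
    using assms(3)[of k] mult_left_mono[OF Suc assms(1)] by linarith
  also have "\<dots> = (1 - r ^ Suc k) / (1 - r) * c"
    using assms(2) by (simp add: field_simps)
  finally show ?case .
qed (use assms(4) in simp)

lemma expectation_norm_sgd_law_le:
  fixes X :: "('d::finite) dataset"
  assumes "0 \<le> \<eta>" and "b \<le> n" and "mean_contraction \<eta> n b X < 1"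
  shows "1 + measure_pmf.expectation (sgd_law \<eta> n b X \<theta> k) norm
    \<le> max (1 + norm \<theta>)
        ((1 - mean_contraction \<eta> n b X
            + \<eta> / real b * measure_pmf.expectation (batch_pmf n b) (\<lambda>S. norm (qvec X S)))
         / (1 - mean_contraction \<eta> n b X))"
    (is "_ \<le> max _ ((1 - ?\<rho> + ?c) / _)")
proof (rule affine_recursion_le_bound)
  show "1 + measure_pmf.expectation (sgd_law \<eta> n b X \<theta> (Suc j)) norm
      \<le> ?\<rho> * (1 + measure_pmf.expectation (sgd_law \<eta> n b X \<theta> j) norm) + (1 - ?\<rho> + ?c)" for j
  proof -
    have "measure_pmf.expectation (sgd_law \<eta> n b X \<theta> (Suc j)) norm
        \<le> measure_pmf.expectation (sgd_law \<eta> n b X \<theta> j) (\<lambda>s. ?\<rho> * norm s + ?c)"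
      unfolding sgd_law.simps
    proof (rule expectation_bind_pmf_le)
      show "measure_pmf.expectation (map_pmf (\<lambda>S. sgd_step \<eta> b X S s) (batch_pmf n b)) norm
          \<le> ?\<rho> * norm s + ?c" for s
        using expectation_norm_sgd_step_le[OF assms(1,2)] by simp
    qed (use assms(2) in \<open>simp_all add: finite_set_pmf_sgd_law finite_batches\<close>)
    also have "\<dots> = ?\<rho> * measure_pmf.expectation (sgd_law \<eta> n b X \<theta> j) norm + ?c"
      using assms(2) by (simp add: integrable_measure_pmf_finite finite_set_pmf_sgd_law)
    finally show ?thesis
      by (simp add: algebra_simps)
  qed
  have "1 - ?\<rho> + ?c = (1 - ?\<rho>) * ((1 - ?\<rho> + ?c) / (1 - ?\<rho>))"
    using assms(3) by simp
  also have "\<dots> \<le> (1 - ?\<rho>) * max (1 + norm \<theta>) ((1 - ?\<rho> + ?c) / (1 - ?\<rho>))"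
    using assms(3) by (intro mult_left_mono) auto
  finally show "1 - ?\<rho> + ?c \<le> (1 - ?\<rho>) * max (1 + norm \<theta>) ((1 - ?\<rho> + ?c) / (1 - ?\<rho>))" .
qed (simp_all add: mean_contraction_nonneg)

lemma expectation_dist_sgd_coupling_le:
  fixes X Xh :: "('d::finite) dataset"
  assumes "0 \<le> \<eta>" and "0 < b" and "b \<le> n"
    and "card {i \<in> {..<n}. X i \<noteq> Xh i} \<le> 1"
    and "\<forall>i<n. norm (X i) \<le> D \<and> norm (Xh i) \<le> D"
    and "mean_contraction \<eta> n b X \<noteq> 1"
    and M: "\<And>j. 1 + measure_pmf.expectation (sgd_law \<eta> n b Xh \<theta> j) norm \<le> M"
  shows "measure_pmf.expectation (sgd_coupling \<eta> n b X Xh \<theta> k) (\<lambda>(t, s). dist t s)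
    \<le> (1 - mean_contraction \<eta> n b X ^ k) / (1 - mean_contraction \<eta> n b X)
       * (2 * \<eta> * D\<^sup>2 / real n * M)"
    (is "_ \<le> (1 - ?\<rho> ^ k) / _ * (?K * M)")
proof (rule affine_recursion_le_geometric[OF mean_contraction_nonneg assms(6)])
  fix j
  let ?C = "sgd_coupling \<eta> n b X Xh \<theta> j"
  have expectation_snd: "measure_pmf.expectation ?C (\<lambda>p. norm (snd p))
      = measure_pmf.expectation (sgd_law \<eta> n b Xh \<theta> j) norm"
    unfolding map_snd_sgd_coupling[of \<eta> n b X Xh \<theta> j, symmetric] by simp
  have "measure_pmf.expectation (sgd_coupling \<eta> n b X Xh \<theta> (Suc j)) (\<lambda>(t, s). dist t s)
      \<le> measure_pmf.expectation ?C (\<lambda>(t, s). ?\<rho> * dist t s + ?K * (1 + norm s))"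
    unfolding sgd_coupling.simps
  proof (rule expectation_bind_pmf_le)
    show "measure_pmf.expectation
        ((\<lambda>(t, s). map_pmf (\<lambda>S. (sgd_step \<eta> b X S t, sgd_step \<eta> b Xh S s)) (batch_pmf n b)) x)
        (\<lambda>(t, s). dist t s) \<le> (\<lambda>(t, s). ?\<rho> * dist t s + ?K * (1 + norm s)) x" for x
      using expectation_dist_sgd_step_le[OF assms(1-5)] by (cases x) simp
  qed (use assms(3) in \<open>auto simp: finite_set_pmf_sgd_coupling finite_batches\<close>)
  also have "\<dots> = ?\<rho> * measure_pmf.expectation ?C (\<lambda>(t, s). dist t s)
      + ?K * (1 + measure_pmf.expectation (sgd_law \<eta> n b Xh \<theta> j) norm)"
    using assms(3) by (simp add: integrable_measure_pmf_finite finite_set_pmf_sgd_coupling case_prod_beta'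
        ring_distribs expectation_snd)
  also have "\<dots> \<le> ?\<rho> * measure_pmf.expectation ?C (\<lambda>(t, s). dist t s) + ?K * M"
    using assms(1) M by (intro add_left_mono mult_left_mono) auto
  finally show "measure_pmf.expectation (sgd_coupling \<eta> n b X Xh \<theta> (Suc j)) (\<lambda>(t, s). dist t s)
      \<le> ?\<rho> * measure_pmf.expectation ?C (\<lambda>(t, s). dist t s) + ?K * M" .
qed simp

theorem theorem3p1:
  fixes \<eta> D \<rho> \<rho>h :: real and n b k :: nat
    and X Xh :: "nat \<Rightarrow> (real^'d) \<times> real"
    and \<X> :: "((real^'d) \<times> real) set" and \<theta> :: "real^'d"
  assumes "\<eta> > 0" and "n \<ge> 1" and "1 \<le> b" and "b \<le> n"
    and "card {i \<in> {..<n}. X i \<noteq> Xh i} \<le> 1"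
    and "\<forall>i<n. X i \<in> \<X> \<and> Xh i \<in> \<X>"
    and "\<forall>x\<in>\<X>. norm x \<le> D"
    and "\<rho> = measure_pmf.expectation (pmf_of_set (batches n b))
               (\<lambda>S. onorm (\<lambda>v. (mat 1 - (\<eta> / real b) *\<^sub>R Hmat X S) *v v))"
    and "\<rho>h = measure_pmf.expectation (pmf_of_set (batches n b))
               (\<lambda>S. onorm (\<lambda>v. (mat 1 - (\<eta> / real b) *\<^sub>R Hmat Xh S) *v v))"
    and "\<rho> < 1" and "\<rho>h < 1"
  shows "wasserstein1 (sgd_law \<eta> n b X \<theta> k) (sgd_law \<eta> n b Xh \<theta> k)
    \<le> (1 - \<rho> ^ k) / (1 - \<rho>) * (2 * \<eta> * D\<^sup>2 / real n) *
       max (1 + norm \<theta>)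
           ((1 - \<rho>h + \<eta> / real b *
               measure_pmf.expectation (pmf_of_set (batches n b)) (\<lambda>S. norm (qvec Xh S)))
            / (1 - \<rho>h))"
proof -
  have bounded: "\<forall>i<n. norm (X i) \<le> D \<and> norm (Xh i) \<le> D"
    using assms(6,7) by blast
  have "wasserstein1 (sgd_law \<eta> n b X \<theta> k) (sgd_law \<eta> n b Xh \<theta> k)
      \<le> measure_pmf.expectation (sgd_coupling \<eta> n b X Xh \<theta> k) (\<lambda>(t, s). dist t s)"
    by (intro wasserstein1_le_coupling map_fst_sgd_coupling map_snd_sgd_coupling)
  also have "\<dots> \<le> (1 - \<rho> ^ k) / (1 - \<rho>) * (2 * \<eta> * D\<^sup>2 / real n *
       max (1 + norm \<theta>)
           ((1 - \<rho>h + \<eta> / real b *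
               measure_pmf.expectation (pmf_of_set (batches n b)) (\<lambda>S. norm (qvec Xh S)))
            / (1 - \<rho>h)))"
    using assms(1,3,4,5) assms(10,11)[unfolded assms(8,9)] bounded unfolding assms(8,9)
    by (intro expectation_dist_sgd_coupling_le expectation_norm_sgd_law_le) auto
  finally show ?thesis
    by (simp only: mult.assoc)
qed

end
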